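(* Let $n\ge 2$, let $F$ be the free group of rank $n$ and $F^{(2)}$ its second derived subgroup. Let $K$ be a field of characteristic $0$ whose transcendence degree over $\mathbb{Q}$ is at least $n$. Then there is a group embedding $F/F^{(2)}\hookrightarrow ST(K)\subset \mathrm{SL}(2,K)$.
   Context: $F^{(2)}$ is the derived subgroup of $F^{(1)}=[F,F]$. $ST(K)$ denotes the group of matrices $\begin{bmatrix} a&0\\ b&a^{-1}\end{bmatrix}$ with $a\in K^*$, $b\in K$. *)

theory Defs
  imports "HOL-Algebra.Algebra" "HOL-Analysis.Analysis"
begin

text \<open>A letter (i, False) stands for the generator x_i, (i, True) for its inverse.\<close>
type_synonym letter = "nat \<times> bool"

definition inv_letter :: "letter \<Rightarrow> letter" where
  "inv_letter l = (fst l, \<not> snd l)"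

fun reduced :: "letter list \<Rightarrow> bool" where
  "reduced (a # b # xs) = (b \<noteq> inv_letter a \<and> reduced (b # xs))"
| "reduced _ = True"

fun red_cons :: "letter \<Rightarrow> letter list \<Rightarrow> letter list" where
  "red_cons a [] = [a]"
| "red_cons a (b # xs) = (if b = inv_letter a then xs else a # b # xs)"

definition word_mult :: "letter list \<Rightarrow> letter list \<Rightarrow> letter list" where
  "word_mult xs ys = foldr red_cons xs ys"

definition free_group :: "nat \<Rightarrow> letter list monoid" where
  "free_group n = \<lparr> carrier = {w. reduced w \<and> (\<forall>l \<in> set w. fst l < n)},
                    monoid.mult = word_mult, monoid.one = [] \<rparr>"

definition alg_indep_rat :: "nat \<Rightarrow> (nat \<Rightarrow> 'k::field_char_0) \<Rightarrow> bool" where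
  "alg_indep_rat n t \<longleftrightarrow>
     (\<forall>(S :: (nat \<Rightarrow> nat) set) (c :: (nat \<Rightarrow> nat) \<Rightarrow> rat).
        finite S \<longrightarrow> (\<forall>e \<in> S. \<forall>i \<ge> n. e i = 0) \<longrightarrow>
        (\<Sum>e\<in>S. of_rat (c e) * (\<Prod>i<n. t i ^ e i)) = 0 \<longrightarrow>
        (\<forall>e \<in> S. c e = 0))"

definition trdeg_ge :: "'k::field_char_0 itself \<Rightarrow> nat \<Rightarrow> bool" where
  "trdeg_ge _ n \<longleftrightarrow> (\<exists>t :: nat \<Rightarrow> 'k. alg_indep_rat n t)"

definition ST :: "('k::field ^ 2 ^ 2) monoid" where
  "ST = \<lparr> carrier = {A. A $ 1 $ 1 \<noteq> 0 \<and> A $ 1 $ 2 = 0 \<and> A $ 2 $ 2 = inverse (A $ 1 $ 1)},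
          monoid.mult = (\<lambda>A B. A ** B), monoid.one = mat 1 \<rparr>"

end

theory Submission
  imports Defs "HOL-Library.Function_Algebras"
begin

(* Choose t_0, ..., t_(n-1) algebraically independent over Q and send the generator x_i to
   [[t_i, 0], [t_i^2, 1/t_i]] in ST(K). Since ST(K) is metabelian, F'' lies in the kernel.
   Conversely, a reduced word w is a lattice path in Z^n starting at 0. Its image has diagonal
   entry t^e, e the endpoint of the path, and lower left entry t^e times a sum of Laurent
   monomials +-t_i t^(-2h), one for each edge (h, h + e_i) traversed, the sign recording the
   direction. The exponent e_i - 2h determines the edge by parity, so by algebraic independence
   w lies in the kernel iff the path is closed and traverses every edge equally often in both
   directions. Then w is the product, along its path, of the elements s(h) x_i s(h + e_i)^-1
   with s(h) = x_0^h_0 ... x_(n-1)^h_(n-1); these lie in F', and each of them occurs as often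
   as its inverse, so the product lies in [F', F'] = F''. *)

lemma inv_letter_inv_letter [simp]: "inv_letter (inv_letter a) = a"
  by (simp add: inv_letter_def)

lemma inv_letter_neq [simp]: "inv_letter a \<noteq> a"
  by (simp add: inv_letter_def prod_eq_iff)

lemma fst_inv_letter [simp]: "fst (inv_letter a) = fst a"
  and snd_inv_letter [simp]: "snd (inv_letter a) = (\<not> snd a)"
  by (simp_all add: inv_letter_def)

lemma reduced_ConsD: "reduced (a # v) \<Longrightarrow> reduced v"
  by (cases v) auto

lemma reduced_red_cons: "reduced v \<Longrightarrow> reduced (red_cons a v)"
  by (cases v) (auto intro: reduced_ConsD)

lemma set_red_cons: "set (red_cons a v) \<subseteq> insert a (set v)"
  by (cases v) auto

lemma red_cons_red_cons_inv: "reduced v \<Longrightarrow> red_cons a (red_cons (inv_letter a) v) = v"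
  by (cases v rule: reduced.cases) auto

lemma word_mult_Nil [simp]: "word_mult [] ys = ys"
  by (simp add: word_mult_def)

lemma word_mult_Cons: "word_mult (a # xs) ys = red_cons a (word_mult xs ys)"
  by (simp add: word_mult_def)

lemma word_mult_append: "word_mult (xs @ ys) zs = word_mult xs (word_mult ys zs)"
  by (simp add: word_mult_def)

lemma reduced_word_mult: "reduced ys \<Longrightarrow> reduced (word_mult xs ys)"
  by (induction xs) (simp_all add: word_mult_Cons reduced_red_cons)

lemma set_word_mult: "set (word_mult xs ys) \<subseteq> set xs \<union> set ys"
  by (induction xs) (use set_red_cons in \<open>fastforce simp: word_mult_Cons\<close>)+

lemma word_mult_red_cons:
  assumes "reduced ys" "reduced zs"
  shows "word_mult (red_cons a ys) zs = red_cons a (word_mult ys zs)"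
proof (cases ys)
  case (Cons b ys')
  show ?thesis
  proof (cases "b = inv_letter a")
    case True
    have "reduced (word_mult ys' zs)"
      using assms Cons by (blast intro: reduced_ConsD reduced_word_mult)
    then show ?thesis
      using Cons True by (simp add: word_mult_Cons red_cons_red_cons_inv)
  qed (use Cons in \<open>simp add: word_mult_Cons\<close>)
qed (simp add: word_mult_Cons)

lemma word_mult_assoc:
  "reduced ys \<Longrightarrow> reduced zs \<Longrightarrow> word_mult (word_mult xs ys) zs = word_mult xs (word_mult ys zs)"
  by (induction xs) (simp_all add: word_mult_Cons word_mult_red_cons reduced_word_mult)

lemma word_mult_Nil_right: "reduced xs \<Longrightarrow> word_mult xs [] = xs"
  by (induction xs rule: reduced.induct) (simp_all add: word_mult_Cons)

definition word_inv :: "letter list \<Rightarrow> letter list" where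
  "word_inv w = rev (map inv_letter w)"

lemma word_mult_word_inv: "reduced w \<Longrightarrow> word_mult (word_inv w) w = []"
proof (induction w)
  case (Cons a w)
  have "word_mult (word_inv (a # w)) (a # w) = word_mult (word_inv w) w"
    by (simp add: word_inv_def word_mult_append word_mult_Cons)
  then show ?case
    using Cons reduced_ConsD by metis
qed (simp add: word_inv_def)

lemma reduced_iff_nth:
  "reduced w \<longleftrightarrow> (\<forall>i. Suc i < length w \<longrightarrow> w ! Suc i \<noteq> inv_letter (w ! i))"
proof (induction w rule: reduced.induct)
  case (1 a b xs)
  have "reduced (a # b # xs) \<longleftrightarrow> b \<noteq> inv_letter a \<and> reduced (b # xs)"
    by simp
  also have "\<dots> \<longleftrightarrow> (\<forall>i. Suc i < length (a # b # xs) \<longrightarrow>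
                         (a # b # xs) ! Suc i \<noteq> inv_letter ((a # b # xs) ! i))"
    unfolding 1 by (auto simp: nth_Cons split: nat.splits)
  finally show ?case .
qed (auto simp: less_Suc_eq)

lemma reduced_word_inv: "reduced w \<Longrightarrow> reduced (word_inv w)"
  unfolding reduced_iff_nth
proof (intro allI impI)
  fix i
  assume reduced: "\<forall>i. Suc i < length w \<longrightarrow> w ! Suc i \<noteq> inv_letter (w ! i)"
    and i: "Suc i < length (word_inv w)"
  define j where "j = length w - Suc (Suc i)"
  have j: "Suc j < length w" "length w - Suc i = Suc j"
    using i by (auto simp: j_def word_inv_def)
  have "inv_letter (w ! j) \<noteq> inv_letter (inv_letter (w ! Suc j))"
    using reduced j(1) by (metis inv_letter_inv_letter)
  then show "word_inv w ! Suc i \<noteq> inv_letter (word_inv w ! i)"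
    using i j by (simp add: word_inv_def rev_nth j_def)
qed

lemma carrier_free_group: "w \<in> carrier (free_group n) \<longleftrightarrow> reduced w \<and> (\<forall>l \<in> set w. fst l < n)"
  by (simp add: free_group_def)

lemma mult_free_group: "x \<otimes>\<^bsub>free_group n\<^esub> y = word_mult x y"
  by (simp add: free_group_def)

lemma one_free_group: "\<one>\<^bsub>free_group n\<^esub> = []"
  by (simp add: free_group_def)

theorem group_free_group: "group (free_group n)"
proof (rule groupI)
  fix x assume x: "x \<in> carrier (free_group n)"
  show "\<exists>y\<in>carrier (free_group n). y \<otimes>\<^bsub>free_group n\<^esub> x = \<one>\<^bsub>free_group n\<^esub>"
  proof
    show "word_inv x \<otimes>\<^bsub>free_group n\<^esub> x = \<one>\<^bsub>free_group n\<^esub>"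
      using x by (simp add: carrier_free_group mult_free_group one_free_group word_mult_word_inv)
    show "word_inv x \<in> carrier (free_group n)"
      using x reduced_word_inv by (auto simp: carrier_free_group word_inv_def)
  qed
qed (use set_word_mult in \<open>fastforce simp: carrier_free_group mult_free_group one_free_group
                                          reduced_word_mult word_mult_assoc\<close>)+

lemma letter_in_free_group: "fst l < n \<Longrightarrow> [l] \<in> carrier (free_group n)"
  by (simp add: carrier_free_group)

lemma free_group_Cons:
  assumes "l # w \<in> carrier (free_group n)"
  shows "w \<in> carrier (free_group n)" and "l # w = [l] \<otimes>\<^bsub>free_group n\<^esub> w"
  using assms by (auto simp: carrier_free_group mult_free_group word_mult_Cons
                       intro: reduced_ConsD elim: reduced.elims)

lemma inv_letter_free_group:
  "fst l < n \<Longrightarrow> inv\<^bsub>free_group n\<^esub> [l] = [inv_letter l]"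
  by (rule group.inv_equality[OF group_free_group])
     (simp_all add: carrier_free_group mult_free_group one_free_group word_mult_Cons)


section \<open>The group ST(K) and its metabelian structure\<close>

definition st :: "'k::field \<Rightarrow> 'k \<Rightarrow> 'k ^ 2 ^ 2" where
  "st a b = (\<chi> i j. if i = 1 \<and> j = 1 then a else if i = 2 \<and> j = 1 then b
                    else if i = 2 \<and> j = 2 then inverse a else 0)"

lemma st_nth [simp]:
  "st a b $ 1 $ 1 = a" "st a b $ 1 $ 2 = 0" "st a b $ 2 $ 1 = b" "st a b $ 2 $ 2 = inverse a"
  by (simp_all add: st_def)

lemma st_eq_iff: "st a b = st c d \<longleftrightarrow> a = c \<and> b = d"
  by (metis st_nth(1,3))

lemma st_mult_st: "st a b ** st c d = st (a * c) (b * c + inverse a * d)"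
  unfolding matrix_matrix_mult_def by (simp add: vec_eq_iff forall_2 sum_2 st_def)

lemma mat_1_eq_st: "mat 1 = st 1 0"
  by (simp add: vec_eq_iff forall_2 st_def mat_def)

lemma carrier_ST: "carrier (ST :: ('k::field ^ 2 ^ 2) monoid) = {st a b | a b. a \<noteq> 0}"
proof -
  have "A = st (A $ 1 $ 1) (A $ 2 $ 1)" if "A $ 1 $ 2 = 0" "A $ 2 $ 2 = inverse (A $ 1 $ 1)"
    for A :: "'k ^ 2 ^ 2"
    using that by (simp add: vec_eq_iff forall_2 st_def)
  then show ?thesis
    by (auto simp: ST_def)
qed

lemma st_in_ST: "a \<noteq> 0 \<Longrightarrow> st a b \<in> carrier ST"
  by (auto simp: carrier_ST)

lemma ST_mult: "st a b \<otimes>\<^bsub>ST\<^esub> st c d = st (a * c) (b * c + inverse a * d)"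
  by (simp add: ST_def st_mult_st)

lemma ST_one: "\<one>\<^bsub>ST\<^esub> = st 1 0"
  by (simp add: ST_def mat_1_eq_st)

theorem group_ST: "group (ST :: ('k::field ^ 2 ^ 2) monoid)"
proof (rule groupI)
  fix x y :: "'k ^ 2 ^ 2"
  assume "x \<in> carrier ST" "y \<in> carrier ST"
  then obtain a b c d where "x = st a b" "y = st c d" "a \<noteq> 0" "c \<noteq> 0"
    by (auto simp: carrier_ST)
  then show "x \<otimes>\<^bsub>ST\<^esub> y \<in> carrier ST"
    by (simp add: ST_mult st_in_ST)
next
  fix x :: "'k ^ 2 ^ 2"
  assume "x \<in> carrier ST"
  then obtain a b where x: "x = st a b" "a \<noteq> 0"
    by (auto simp: carrier_ST)
  show "\<exists>y\<in>carrier ST. y \<otimes>\<^bsub>ST\<^esub> x = \<one>\<^bsub>ST\<^esub>"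
    using x by (intro bexI[of _ "st (inverse a) (- b)"]) (simp_all add: ST_mult ST_one st_in_ST)
next
  show "\<one>\<^bsub>ST\<^esub> \<in> carrier (ST :: ('k ^ 2 ^ 2) monoid)"
    by (simp add: ST_one st_in_ST)
qed (simp_all add: ST_def matrix_mul_assoc)

lemma ST_inv: "a \<noteq> 0 \<Longrightarrow> inv\<^bsub>ST\<^esub> (st a b) = st (inverse a) (- b)"
  by (rule group.inv_equality[OF group_ST]) (simp_all add: ST_mult ST_one st_in_ST)

lemma derived_ST_subset: "derived ST (carrier ST) \<subseteq> {st 1 b | b. True}"
  unfolding derived_def
proof (rule group.generate_subgroup_incl[OF group_ST])
  show "subgroup {st 1 b | b. True} (ST :: ('k::field ^ 2 ^ 2) monoid)"
    by (rule group.subgroupI[OF group_ST]) (auto simp: st_in_ST ST_inv ST_mult)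
  show "derived_set ST (carrier ST) \<subseteq> {st 1 b | b. True}"
    by (auto simp: carrier_ST ST_inv ST_mult field_simps)
qed

lemma second_derived_ST:
  "derived ST (derived ST (carrier ST)) = {\<one>\<^bsub>ST :: ('k::field ^ 2 ^ 2) monoid\<^esub>}"
proof -
  interpret ST: group "ST :: ('k ^ 2 ^ 2) monoid"
    by (rule group_ST)
  have "x \<otimes>\<^bsub>ST\<^esub> y \<otimes>\<^bsub>ST\<^esub> inv\<^bsub>ST\<^esub> x \<otimes>\<^bsub>ST\<^esub> inv\<^bsub>ST\<^esub> y = \<one>\<^bsub>ST\<^esub>"
    if x: "x \<in> derived ST (carrier ST)" and y: "y \<in> derived ST (carrier ST)"
    for x y :: "'k ^ 2 ^ 2"
  proof -
    obtain b d where "x = st 1 b" "y = st 1 d"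
      using x y derived_ST_subset by blast
    then show ?thesis
      by (simp add: ST_inv ST_mult ST_one)
  qed
  then have "derived_set ST (derived ST (carrier ST)) \<subseteq> {\<one>\<^bsub>ST :: ('k ^ 2 ^ 2) monoid\<^esub>}"
    by auto
  then have "derived ST (derived ST (carrier ST)) \<subseteq> {\<one>\<^bsub>ST :: ('k ^ 2 ^ 2) monoid\<^esub>}"
    unfolding derived_def by (rule ST.generate_subgroup_incl[OF _ ST.triv_subgroup])
  moreover have "\<one>\<^bsub>ST\<^esub> \<in> derived ST (derived ST (carrier (ST :: ('k ^ 2 ^ 2) monoid)))"
    by (simp add: ST.derived_in_carrier ST.derived_is_subgroup subgroup.one_closed)
  ultimately show ?thesis
    by blast
qed

lemma (in group) second_derived_subset_kernel_ST:
  assumes "\<phi> \<in> hom G (ST :: ('k::field ^ 2 ^ 2) monoid)"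
  shows "derived G (derived G (carrier G)) \<subseteq> kernel G ST \<phi>"
proof -
  interpret \<phi>: group_hom G "ST :: ('k ^ 2 ^ 2) monoid" \<phi>
    by (simp add: assms group_ST group_hom_axioms_def group_hom_def is_group)
  have carrier: "derived G (derived G (carrier G)) \<subseteq> carrier G"
    by (intro derived_in_carrier) simp
  have "\<phi> ` derived G (derived G (carrier G)) = derived ST (derived ST (\<phi> ` carrier G))"
    by (simp add: \<phi>.derived_img derived_in_carrier)
  also have "\<dots> \<subseteq> derived ST (derived ST (carrier ST))"
    by (intro \<phi>.H.mono_derived) auto
  finally show ?thesis
    using carrier by (auto simp: kernel_def second_derived_ST)
qed

definition signed_prod :: "('a, 'b) monoid_scheme \<Rightarrow> ('e \<Rightarrow> 'a) \<Rightarrow> ('e \<times> bool) list \<Rightarrow> 'a" where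
  "signed_prod G f zs =
     foldr (\<lambda>(e, s) acc. (if s then inv\<^bsub>G\<^esub> (f e) else f e) \<otimes>\<^bsub>G\<^esub> acc) zs \<one>\<^bsub>G\<^esub>"

lemma signed_prod_Nil [simp]: "signed_prod G f [] = \<one>\<^bsub>G\<^esub>"
  by (simp add: signed_prod_def)

lemma signed_prod_Cons [simp]:
  "signed_prod G f ((e, s) # zs) = (if s then inv\<^bsub>G\<^esub> (f e) else f e) \<otimes>\<^bsub>G\<^esub> signed_prod G f zs"
  by (simp add: signed_prod_def)

lemma (in group) signed_prod_in_subgroup:
  assumes "subgroup D G" and "\<forall>z \<in> set zs. f (fst z) \<in> D"
  shows "signed_prod G f zs \<in> D"
  using assms(2)
proof (induction zs)
  case (Cons z zs)
  obtain e s where "z = (e, s)"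
    by fastforce
  with Cons show ?case
    using assms(1) by (simp add: subgroup.m_closed subgroup.m_inv_closed)
qed (simp add: subgroup.one_closed assms(1))

lemma (in group) signed_prod_append:
  assumes "\<forall>z \<in> set (xs @ ys). f (fst z) \<in> carrier G"
  shows "signed_prod G f (xs @ ys) = signed_prod G f xs \<otimes> signed_prod G f ys"
  using assms
proof (induction xs)
  case (Cons z xs)
  obtain e s where "z = (e, s)"
    by fastforce
  with Cons show ?case
    by (auto simp: m_assoc signed_prod_in_subgroup[OF subgroup_self])
qed (simp add: signed_prod_in_subgroup[OF subgroup_self])

lemma (in group) inv_mult_cancel_left: "x \<in> carrier G \<Longrightarrow> y \<in> carrier G \<Longrightarrow> inv x \<otimes> (x \<otimes> y) = y"
  by (simp add: m_assoc[symmetric])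

lemma (in group) conj_mult_in_derived:
  assumes D: "subgroup D G" and "u \<in> D" "a \<in> D" "b \<in> carrier G" and ab: "a \<otimes> b \<in> derived G D"
  shows "u \<otimes> (a \<otimes> (inv u \<otimes> b)) \<in> derived G D"
proof -
  have carrier: "u \<in> carrier G" "a \<in> carrier G"
    using D \<open>u \<in> D\<close> \<open>a \<in> D\<close> by (simp_all add: subgroup.mem_carrier)
  have "u \<otimes> a \<otimes> inv u \<otimes> inv a \<in> derived G D"
    unfolding derived_def using assms by (intro generate.incl) blast
  moreover have "subgroup (derived G D) G"
    using D by (simp add: derived_is_subgroup subgroup.subset)
  ultimately have "(u \<otimes> a \<otimes> inv u \<otimes> inv a) \<otimes> (a \<otimes> b) \<in> derived G D"
    using ab by (simp add: subgroup.m_closed)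
  moreover have "(u \<otimes> a \<otimes> inv u \<otimes> inv a) \<otimes> (a \<otimes> b) = u \<otimes> (a \<otimes> (inv u \<otimes> b))"
    using carrier \<open>b \<in> carrier G\<close> by (simp add: m_assoc inv_mult_cancel_left)
  ultimately show ?thesis
    by simp
qed

text \<open>Cancelling a factor against a later occurrence of its inverse changes the product only
  by a commutator of two elements of D.\<close>
lemma (in group) signed_prod_balanced_in_derived:
  assumes D: "subgroup D G" and "\<forall>z \<in> set zs. f (fst z) \<in> D"
    and "\<And>e. count_list zs (e, True) = count_list zs (e, False)"
  shows "signed_prod G f zs \<in> derived G D"
  using assms(2,3)
proof (induction "length zs" arbitrary: zs rule: less_induct)
  case less
  show ?case
  proof (cases zs)
    case Nil
    then show ?thesis
      using D by (simp add: derived_is_subgroup subgroup.one_closed subgroup.subset)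
  next
    case (Cons z rest)
    obtain e s where z: "z = (e, s)"
      by fastforce
    have "count_list rest (e, \<not> s) > 0"
      using less.prems(2)[of e] Cons z by (cases s) auto
    then obtain xs ys where rest: "rest = xs @ (e, \<not> s) # ys"
      by (metis count_notin less_irrefl split_list)
    define u where "u = (if s then inv (f e) else f e)"
    have "f e \<in> D"
      using less.prems(1) Cons z by auto
    then have u: "u \<in> D" "(if \<not> s then inv (f e) else f e) = inv u"
      using D by (auto simp: u_def subgroup.m_inv_closed subgroup.mem_carrier)
    have in_D: "\<forall>z' \<in> set (xs @ ys). f (fst z') \<in> D"
      using less.prems(1) Cons rest by auto
    then have in_carrier: "\<forall>z' \<in> set (xs @ (e, \<not> s) # ys). f (fst z') \<in> carrier G"
      using \<open>f e \<in> D\<close> D by (auto simp: subgroup.mem_carrier)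
    have "signed_prod G f zs = u \<otimes> (signed_prod G f xs \<otimes> (inv u \<otimes> signed_prod G f ys))"
      using Cons z rest u(2) signed_prod_append[OF in_carrier] by (simp add: u_def)
    moreover have "signed_prod G f (xs @ ys) \<in> derived G D"
    proof (rule less.hyps)
      fix e'
      show "count_list (xs @ ys) (e', True) = count_list (xs @ ys) (e', False)"
        using less.prems(2)[of e'] Cons z rest by (cases s) (auto split: if_splits)
    qed (use Cons rest in_D in auto)
    then have "signed_prod G f xs \<otimes> signed_prod G f ys \<in> derived G D"
      using in_D D by (simp add: signed_prod_append subgroup.mem_carrier)
    ultimately show ?thesis
      using in_D D u
      by (simp add: conj_mult_in_derived signed_prod_in_subgroup subgroup.mem_carrier)
  qed
qed

definition power_prod :: "('a, 'b) monoid_scheme \<Rightarrow> (nat \<Rightarrow> 'a) \<Rightarrow> (nat \<Rightarrow> int) \<Rightarrow> nat list \<Rightarrow> 'a" where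
  "power_prod G a k J = foldr (\<lambda>j acc. a j [^]\<^bsub>G\<^esub> k j \<otimes>\<^bsub>G\<^esub> acc) J \<one>\<^bsub>G\<^esub>"

lemma power_prod_Nil [simp]: "power_prod G a k [] = \<one>\<^bsub>G\<^esub>"
  by (simp add: power_prod_def)

lemma power_prod_Cons [simp]:
  "power_prod G a k (j # J) = a j [^]\<^bsub>G\<^esub> k j \<otimes>\<^bsub>G\<^esub> power_prod G a k J"
  by (simp add: power_prod_def)

lemma (in group) power_prod_closed:
  "(\<And>j. j \<in> set J \<Longrightarrow> a j \<in> carrier G) \<Longrightarrow> power_prod G a k J \<in> carrier G"
  by (induction J) auto

lemma (in group) power_prod_zero: "power_prod G a 0 J = \<one>"
  by (induction J) auto

lemma (in group_hom) hom_power_prod: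
  "(\<And>j. j \<in> set J \<Longrightarrow> a j \<in> carrier G) \<Longrightarrow> h (power_prod G a k J) = power_prod H (h \<circ> a) k J"
  by (induction J) (simp_all add: G.power_prod_closed hom_int_pow)

lemma (in comm_group) power_prod_add_indicator:
  assumes "\<And>j. j \<in> set J \<Longrightarrow> a j \<in> carrier G" and "distinct J"
  shows "power_prod G a (k + (\<lambda>j. if j = i then 1 else 0)) J
           = (if i \<in> set J then a i else \<one>) \<otimes> power_prod G a k J"
  using assms
proof (induction J)
  case (Cons j J)
  have "a j \<in> carrier G" "power_prod G a k J \<in> carrier G"
    using Cons.prems by (auto intro: power_prod_closed)
  with Cons show ?case
    by (auto simp: int_pow_mult m_assoc m_lcomm)
qed simp

section \<open>Laurent monomials in algebraically independent elements\<close>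

locale alg_indep_family =
  fixes n :: nat and t :: "nat \<Rightarrow> 'k::field_char_0"
  assumes alg_indep: "alg_indep_rat n t"
begin

lemma alg_indepD:
  "finite S \<Longrightarrow> \<forall>e\<in>S. \<forall>i\<ge>n. e i = 0 \<Longrightarrow> (\<Sum>e\<in>S. of_rat (c e) * (\<Prod>i<n. t i ^ e i)) = 0
    \<Longrightarrow> e \<in> S \<Longrightarrow> c e = 0"
  using alg_indep unfolding alg_indep_rat_def by blast

lemma t_nonzero: "j < n \<Longrightarrow> t j \<noteq> 0"
proof
  assume j: "j < n" and "t j = 0"
  define e where "e = (\<lambda>i::nat. if i = j then 1::nat else 0)"
  have "(\<Prod>i<n. t i ^ e i) = 0"
    using j \<open>t j = 0\<close> by (auto simp: e_def prod_zero_iff intro!: bexI[of _ j])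
  then have "(1 :: rat) = 0"
    using j by (intro alg_indepD[of "{e}" "\<lambda>_. 1" e]) (auto simp: e_def)
  then show False
    by simp
qed

definition tmon :: "(nat \<Rightarrow> int) \<Rightarrow> 'k" where
  "tmon h = (\<Prod>j<n. t j powi h j)"

lemma tmon_zero [simp]: "tmon 0 = 1" "tmon (\<lambda>_. 0) = 1"
  by (simp_all add: tmon_def)

lemma tmon_nonzero: "tmon h \<noteq> 0"
  by (simp add: tmon_def t_nonzero)

lemma tmon_add: "tmon (g + h) = tmon g * tmon h"
  by (simp add: tmon_def power_int_add t_nonzero prod.distrib)

lemma tmon_uminus: "tmon (- h) = inverse (tmon h)"
  by (simp add: tmon_def power_int_minus prod_inversef[symmetric])

lemma tmon_diff: "tmon (g - h) = tmon g * inverse (tmon h)"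
  by (simp only: diff_conv_add_uminus tmon_add tmon_uminus)

lemma tmon_double: "tmon (2 * h) = tmon h ^ 2"
  by (subst mult_2) (simp only: tmon_add power2_eq_square)

lemma tmon_nonneg: "(\<And>j. j < n \<Longrightarrow> h j \<ge> 0) \<Longrightarrow> tmon h = (\<Prod>j<n. t j ^ nat (h j))"
  unfolding tmon_def by (rule prod.cong) (simp_all add: power_int_def)

lemma tmon_unit: "i < n \<Longrightarrow> tmon (\<lambda>j. if j = i then 1 else 0) = t i"
proof -
  have "tmon (\<lambda>j. if j = i then 1 else 0) = (\<Prod>j<n. if j = i then t i else 1)"
    unfolding tmon_def by (rule prod.cong) auto
  then show "i < n \<Longrightarrow> ?thesis"
    by simp
qed

lemma alg_indep_inj:
  assumes "finite S" "inj_on \<psi> S" "\<forall>e\<in>S. \<forall>i\<ge>n. \<psi> e i = 0"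
    and "(\<Sum>e\<in>S. of_rat (c e) * (\<Prod>i<n. t i ^ \<psi> e i)) = 0" and "e \<in> S"
  shows "c e = 0"
proof -
  define c' where "c' u = c (the_inv_into S \<psi> u)" for u
  have "(\<Sum>u\<in>\<psi> ` S. of_rat (c' u) * (\<Prod>i<n. t i ^ u i)) = 0"
    using assms(2,4) by (simp add: sum.reindex c'_def the_inv_into_f_f)
  then have "c' (\<psi> e) = 0"
    using assms(1,3,5) by (intro alg_indepD[of "\<psi> ` S" c' "\<psi> e"]) auto
  then show ?thesis
    using assms(2,5) by (simp add: c'_def the_inv_into_f_f)
qed

text \<open>Shifting all exponent vectors by a common constant B turns Laurent monomials into monomials,
  to which algebraic independence applies.\<close>
theorem tmon_linear_independent:
  assumes E: "finite E" "inj_on \<phi> E" "\<forall>v\<in>E. \<forall>j\<ge>n. \<phi> v j = 0"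
    and sum: "(\<Sum>v\<in>E. of_rat (c v) * tmon (\<phi> v)) = 0" and "v \<in> E"
  shows "c v = 0"
proof -
  define B :: int where "B = (\<Sum>v\<in>E. \<Sum>j<n. \<bar>\<phi> v j\<bar>)"
  have bound: "\<bar>\<phi> v j\<bar> \<le> B" if "v \<in> E" "j < n" for v j
  proof -
    have "\<bar>\<phi> v j\<bar> \<le> (\<Sum>j<n. \<bar>\<phi> v j\<bar>)"
      by (rule member_le_sum) (use that in auto)
    moreover have "(\<Sum>j<n. \<bar>\<phi> v j\<bar>) \<le> B"
      unfolding B_def by (rule member_le_sum) (use that E in \<open>auto intro: sum_nonneg\<close>)
    ultimately show ?thesis
      by linarith
  qed
  define shift where "shift v = (\<lambda>j. if j < n then nat (\<phi> v j + B) else 0)" for v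
  have tmon_shift: "tmon (\<phi> v) * tmon (\<lambda>_. B) = (\<Prod>j<n. t j ^ shift v j)" if "v \<in> E" for v
  proof -
    have "0 \<le> \<phi> v j + B" if "j < n" for j
      using bound[OF \<open>v \<in> E\<close> that] by arith
    then have "tmon (\<phi> v + (\<lambda>_. B)) = (\<Prod>j<n. t j ^ nat (\<phi> v j + B))"
      by (simp add: tmon_nonneg)
    also have "\<dots> = (\<Prod>j<n. t j ^ shift v j)"
      by (rule prod.cong) (simp_all add: shift_def)
    finally show ?thesis
      by (simp add: tmon_add)
  qed
  have recover: "\<phi> v = (\<lambda>j. if j < n then int (shift v j) - B else 0)" if "v \<in> E" for v
    using bound[OF that] E(3) that by (force simp: shift_def)
  have "inj_on shift E"
  proof (rule inj_onI)
    fix v w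
    assume "v \<in> E" "w \<in> E" "shift v = shift w"
    then have "\<phi> v = \<phi> w"
      using recover[OF \<open>v \<in> E\<close>] recover[OF \<open>w \<in> E\<close>] \<open>shift v = shift w\<close> by metis
    with E(2) \<open>v \<in> E\<close> \<open>w \<in> E\<close> show "v = w"
      by (simp add: inj_on_eq_iff)
  qed
  moreover have "(\<Sum>v\<in>E. of_rat (c v) * (\<Prod>j<n. t j ^ shift v j)) = 0"
    using sum by (simp add: tmon_shift[symmetric] mult.assoc[symmetric] sum_distrib_right[symmetric])
  ultimately show ?thesis
    using E(1) \<open>v \<in> E\<close> by (intro alg_indep_inj[of E shift c v]) (auto simp: shift_def)
qed

lemma tmon_eq_1_iff:
  assumes "\<forall>j\<ge>n. h j = 0"
  shows "tmon h = 1 \<longleftrightarrow> h = 0"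
proof
  assume "tmon h = 1"
  show "h = 0"
  proof (rule ccontr)
    assume "h \<noteq> 0"
    define c :: "(nat \<Rightarrow> int) \<Rightarrow> rat" where "c v = (if v = h then 1 else -1)" for v
    have "(\<Sum>v\<in>{h, 0}. of_rat (c v) * tmon v) = 0"
      using \<open>h \<noteq> 0\<close> \<open>tmon h = 1\<close> by (simp add: c_def)
    then have "c h = 0"
      using assms by (intro tmon_linear_independent[where \<phi> = id]) auto
    then show False
      by (simp add: c_def)
  qed
qed simp

end

section \<open>Words as lattice paths\<close>

definition unit_vec :: "nat \<Rightarrow> nat \<Rightarrow> int" where
  "unit_vec i = (\<lambda>j. if j = i then 1 else 0)"

definition letter_sign :: "bool \<Rightarrow> 'a::ring_1" where
  "letter_sign s = (if s then -1 else 1)"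

definition letter_exp :: "letter \<Rightarrow> nat \<Rightarrow> int" where
  "letter_exp l = (if snd l then - unit_vec (fst l) else unit_vec (fst l))"

definition word_exp :: "letter list \<Rightarrow> nat \<Rightarrow> int" where
  "word_exp w = sum_list (map letter_exp w)"

text \<open>Read from the lattice point g, a word traverses the unit edges listed by edges g w;
  an edge (h, i) joins h to h + e_i, and the flag records a traversal against e_i.\<close>
fun edges :: "(nat \<Rightarrow> int) \<Rightarrow> letter list \<Rightarrow> (((nat \<Rightarrow> int) \<times> nat) \<times> bool) list" where
  "edges g [] = []"
| "edges g (l # w) =
     ((if snd l then g + letter_exp l else g, fst l), snd l) # edges (g + letter_exp l) w"

definition edge_exp :: "(nat \<Rightarrow> int) \<times> nat \<Rightarrow> nat \<Rightarrow> int" where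
  "edge_exp e = unit_vec (snd e) - 2 * fst e"

lemma letter_exp_inv_letter: "letter_exp (inv_letter l) = - letter_exp l"
  by (simp add: letter_exp_def inv_letter_def)

lemma word_exp_Nil [simp]: "word_exp [] = 0"
  and word_exp_Cons [simp]: "word_exp (l # w) = letter_exp l + word_exp w"
  by (simp_all add: word_exp_def)

lemma word_exp_eq_0_outside:
  "\<forall>l\<in>set w. fst l < n \<Longrightarrow> j \<ge> n \<Longrightarrow> word_exp w j = 0"
  by (induction w) (auto simp: letter_exp_def unit_vec_def)

lemma edges_in_range:
  assumes "\<forall>l\<in>set w. fst l < n" and "((h, i), s) \<in> set (edges g w)"
  shows "i < n" and "\<forall>j\<ge>n. h j = g j"
  using assms
  by (induction w arbitrary: g) (auto simp: letter_exp_def unit_vec_def split: if_splits)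

text \<open>The first summand of edge_exp is odd at snd e and the second is even everywhere.\<close>
lemma inj_edge_exp: "inj edge_exp"
proof (rule injI)
  fix e e' :: "(nat \<Rightarrow> int) \<times> nat"
  assume eq: "edge_exp e = edge_exp e'"
  obtain h i h' i' where e: "e = (h, i)" "e' = (h', i')"
    by fastforce
  have at: "(if j = i then 1 else 0) - 2 * h j = (if j = i' then 1 else 0) - 2 * h' j" for j
    using fun_cong[OF eq, of j] by (simp add: edge_exp_def unit_vec_def e)
  have "i = i'"
  proof (rule ccontr)
    assume "i \<noteq> i'"
    then have "1 - 2 * h i = - 2 * h' i"
      using at[of i] by simp
    then show False
      by presburger
  qed
  moreover have "h j = h' j" for j
    using at[of j] \<open>i = i'\<close> by (cases "j = i") auto
  ultimately show "e = e'"
    by (auto simp: e)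
qed

lemma sum_list_map_eq_sum_count_of_nat:
  fixes f :: "'a \<Rightarrow> 'b::comm_semiring_1"
  assumes "set xs \<subseteq> A" and "finite A"
  shows "sum_list (map f xs) = (\<Sum>x\<in>A. of_nat (count_list xs x) * f x)"
  using assms(1)
proof (induction xs)
  case (Cons a xs)
  have "(\<Sum>x\<in>A. of_nat (count_list (a # xs) x) * f x)
          = (\<Sum>x\<in>A. of_nat (count_list xs x) * f x + (if x = a then f x else 0))"
    by (rule sum.cong) (auto simp: algebra_simps)
  also have "\<dots> = (\<Sum>x\<in>A. of_nat (count_list xs x) * f x) + f a"
    using Cons.prems assms(2) by (simp add: sum.distrib sum.delta')
  finally show ?case
    using Cons by (simp add: add.commute)
qed simp

context alg_indep_family
begin

lemma tmon_letter_exp: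
  "fst l < n \<Longrightarrow> tmon (letter_exp l) = (if snd l then inverse (t (fst l)) else t (fst l))"
  by (simp add: letter_exp_def tmon_uminus tmon_unit unit_vec_def)

lemma tmon_edge_exp:
  "snd e < n \<Longrightarrow> tmon (edge_exp e) = t (snd e) * inverse (tmon (fst e)) ^ 2"
  by (simp add: edge_exp_def tmon_diff tmon_double tmon_unit unit_vec_def power_inverse)

definition gen_mat :: "letter \<Rightarrow> 'k ^ 2 ^ 2" where
  "gen_mat l = st (tmon (letter_exp l)) (letter_sign (snd l) * t (fst l) ^ 2)"

definition word_mat :: "letter list \<Rightarrow> 'k ^ 2 ^ 2" where
  "word_mat w = foldr (\<lambda>l M. gen_mat l ** M) w (mat 1)"

lemma word_mat_Nil [simp]: "word_mat [] = mat 1"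
  and word_mat_Cons [simp]: "word_mat (l # w) = gen_mat l ** word_mat w"
  by (simp_all add: word_mat_def)

definition lower_sum :: "(nat \<Rightarrow> int) \<Rightarrow> letter list \<Rightarrow> 'k" where
  "lower_sum g w = (\<Sum>(e, s) \<leftarrow> edges g w. letter_sign s * tmon (edge_exp e))"

lemma lower_sum_Cons:
  "lower_sum g (l # w) =
     letter_sign (snd l) * tmon (edge_exp (if snd l then g + letter_exp l else g, fst l))
     + lower_sum (g + letter_exp l) w"
  by (simp add: lower_sum_def)

lemma lower_sum_add: "lower_sum (g + h) w = inverse (tmon g) ^ 2 * lower_sum h w"
proof (induction w arbitrary: h)
  case (Cons l w)
  have edge: "tmon (edge_exp (g + h', i)) = inverse (tmon g) ^ 2 * tmon (edge_exp (h', i))" for h' i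
  proof -
    have "edge_exp (g + h', i) = edge_exp (h', i) - 2 * g"
      by (simp add: edge_exp_def algebra_simps)
    then show ?thesis
      by (simp add: tmon_diff tmon_double power_inverse)
  qed
  have "lower_sum (g + h) (l # w)
          = letter_sign (snd l) * tmon (edge_exp (g + (if snd l then h + letter_exp l else h), fst l))
            + lower_sum (g + (h + letter_exp l)) w"
    by (cases "snd l") (simp_all add: lower_sum_Cons add.assoc)
  also have "\<dots> = inverse (tmon g) ^ 2 * lower_sum h (l # w)"
    by (simp only: edge Cons.IH lower_sum_Cons ring_distribs mult.left_commute)
  finally show ?case .
qed (simp add: lower_sum_def)

lemma lower_sum_shift: "lower_sum g w = inverse (tmon g) ^ 2 * lower_sum 0 w"
  using lower_sum_add[of g 0 w] by simp

text \<open>The lower entry of a generator matrix is the term of its own edge, read from 0.\<close>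
lemma gen_mat_lower_entry:
  assumes "fst l < n"
  shows "letter_sign (snd l) * t (fst l) ^ 2
           = tmon (letter_exp l) * (letter_sign (snd l) *
               tmon (edge_exp (if snd l then letter_exp l else 0, fst l)))"
proof -
  have "t (fst l) \<noteq> 0"
    using assms by (rule t_nonzero)
  then show ?thesis
    using assms
    by (simp add: tmon_letter_exp tmon_edge_exp letter_sign_def letter_exp_def tmon_uminus
                  tmon_unit unit_vec_def field_simps power2_eq_square)
qed

lemma word_mat_eq:
  "\<forall>l\<in>set w. fst l < n \<Longrightarrow>
     word_mat w = st (tmon (word_exp w)) (tmon (word_exp w) * lower_sum 0 w)"
proof (induction w)
  case Nil
  then show ?case
    by (simp add: mat_1_eq_st lower_sum_def)
next
  case (Cons l w)
  define a where "a = tmon (letter_exp l)"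
  define c where "c = tmon (word_exp w)"
  have "a \<noteq> 0"
    by (simp add: a_def tmon_nonzero)
  have lower: "letter_sign (snd l) * t (fst l) ^ 2
                = a * (letter_sign (snd l) * tmon (edge_exp (if snd l then letter_exp l else 0, fst l)))"
    using Cons.prems by (simp add: a_def gen_mat_lower_entry)
  have IH: "word_mat w = st c (c * lower_sum 0 w)"
    using Cons.IH Cons.prems by (simp add: c_def zero_fun_def)
  have "word_mat (l # w) = gen_mat l ** word_mat w"
    by simp
  also have "\<dots> = st (a * c) (letter_sign (snd l) * t (fst l) ^ 2 * c
                               + inverse a * (c * lower_sum 0 w))"
    by (simp add: IH gen_mat_def st_mult_st a_def)
  also have "\<dots> = st (a * c) (a * c * (letter_sign (snd l) *
                      tmon (edge_exp (if snd l then letter_exp l else 0, fst l))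
                      + inverse a ^ 2 * lower_sum 0 w))"
    unfolding lower using \<open>a \<noteq> 0\<close> by (simp add: st_eq_iff field_simps power2_eq_square)
  also have "\<dots> = st (tmon (word_exp (l # w))) (tmon (word_exp (l # w)) * lower_sum 0 (l # w))"
    by (simp add: lower_sum_Cons lower_sum_shift[of "letter_exp l"] tmon_add a_def c_def)
  finally show ?case .
qed

lemma gen_mat_inv_letter: "gen_mat l ** gen_mat (inv_letter l) = mat 1"
  using tmon_nonzero[of "letter_exp l"]
  by (simp add: gen_mat_def letter_exp_inv_letter tmon_uminus st_mult_st mat_1_eq_st
                letter_sign_def)

lemma word_mat_red_cons: "word_mat (red_cons a v) = gen_mat a ** word_mat v"
proof (cases v)
  case (Cons b v')
  show ?thesis
  proof (cases "b = inv_letter a")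
    case True
    have "gen_mat a ** word_mat v = (gen_mat a ** gen_mat b) ** word_mat v'"
      using Cons by (simp add: matrix_mul_assoc)
    then show ?thesis
      using Cons True by (simp add: gen_mat_inv_letter)
  qed (simp add: Cons)
qed simp

lemma word_mat_word_mult: "word_mat (word_mult xs ys) = word_mat xs ** word_mat ys"
  by (induction xs) (simp_all add: word_mult_Cons word_mat_red_cons matrix_mul_assoc)

lemma word_mat_hom: "word_mat \<in> hom (free_group n) ST"
proof (rule homI)
  fix w
  assume "w \<in> carrier (free_group n)"
  then show "word_mat w \<in> carrier ST"
    by (simp add: carrier_free_group word_mat_eq tmon_nonzero st_in_ST)
qed (simp add: mult_free_group ST_def word_mat_word_mult)

end

section \<open>The kernel of the representation\<close>

lemma (in group_hom) FactGroup_kernel_mon: "(\<lambda>C. the_elem (h ` C)) \<in> mon (G Mod kernel G H h) H"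
  using FactGroup_hom FactGroup_inj_on by (simp add: mon_def)

context alg_indep_family
begin

lemma lower_sum_eq_0_imp_balanced:
  assumes w: "\<forall>l\<in>set w. fst l < n" and "lower_sum 0 w = 0"
  shows "count_list (edges 0 w) (e, True) = count_list (edges 0 w) (e, False)"
proof -
  define zs where "zs = edges 0 w"
  define E where "E = fst ` set zs"
  define cnt where "cnt e = int (count_list zs (e, False)) - int (count_list zs (e, True))" for e
  have "finite E"
    by (simp add: E_def)
  have E_range: "snd e < n" "\<forall>j\<ge>n. fst e j = 0" if "e \<in> E" for e
    using that edges_in_range[OF w] by (fastforce simp: E_def zs_def)+
  have "lower_sum 0 w = (\<Sum>z\<in>E \<times> UNIV. of_nat (count_list zs z) *
                            (letter_sign (snd z) * tmon (edge_exp (fst z))))"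
    unfolding lower_sum_def zs_def[symmetric] case_prod_beta
    using \<open>finite E\<close> by (intro sum_list_map_eq_sum_count_of_nat) (force simp: E_def)+
  also have "\<dots> = (\<Sum>e\<in>E. \<Sum>s\<in>UNIV. of_nat (count_list zs (e, s)) *
                                         (letter_sign s * tmon (edge_exp e)))"
    by (subst sum.cartesian_product) (simp add: case_prod_beta)
  also have "\<dots> = (\<Sum>e\<in>E. of_rat (of_int (cnt e)) * tmon (edge_exp e))"
    by (simp add: UNIV_bool cnt_def letter_sign_def algebra_simps of_rat_diff of_rat_of_nat_eq)
  finally have "(\<Sum>e\<in>E. of_rat (of_int (cnt e)) * tmon (edge_exp e)) = 0"
    using assms(2) by simp
  moreover have "edge_exp e j = 0" if "e \<in> E" "j \<ge> n" for e j
    using E_range[OF that(1)] that(2) by (simp add: edge_exp_def unit_vec_def)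
  ultimately have cnt_zero: "of_int (cnt e) = (0 :: rat)" if "e \<in> E" for e
    using \<open>finite E\<close> that
    by (intro tmon_linear_independent[of E edge_exp]) (auto intro: inj_on_subset[OF inj_edge_exp])
  show ?thesis
  proof (cases "e \<in> E")
    case True
    then show ?thesis
      using cnt_zero[of e] by (simp add: cnt_def zs_def)
  next
    case False
    then have "(e, s) \<notin> set zs" for s
      by (force simp: E_def)
    then show ?thesis
      by (simp add: zs_def count_notin)
  qed
qed

sublocale free: group "free_group n"
  by (rule group_free_group)

definition monomial_word :: "(nat \<Rightarrow> int) \<Rightarrow> letter list" where
  "monomial_word h = power_prod (free_group n) (\<lambda>j. [(j, False)]) h [0..<n]"

definition edge_word :: "(nat \<Rightarrow> int) \<times> nat \<Rightarrow> letter list" where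
  "edge_word e = monomial_word (fst e) \<otimes>\<^bsub>free_group n\<^esub> [(snd e, False)] \<otimes>\<^bsub>free_group n\<^esub>
                   inv\<^bsub>free_group n\<^esub> monomial_word (fst e + unit_vec (snd e))"

lemma monomial_word_closed: "monomial_word h \<in> carrier (free_group n)"
  by (auto simp: monomial_word_def letter_in_free_group intro!: free.power_prod_closed)

lemma monomial_word_zero: "monomial_word 0 = \<one>\<^bsub>free_group n\<^esub>"
  by (simp add: monomial_word_def free.power_prod_zero)

lemma edge_word_closed: "snd e < n \<Longrightarrow> edge_word e \<in> carrier (free_group n)"
  by (simp add: edge_word_def monomial_word_closed letter_in_free_group)

lemma signed_edge_word_letter:
  fixes g :: "nat \<Rightarrow> int" and l :: letter
  assumes "fst l < n"
  defines "e \<equiv> (if snd l then g + letter_exp l else g, fst l)"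
  shows "(if snd l then inv\<^bsub>free_group n\<^esub> (edge_word e) else edge_word e)
           = monomial_word g \<otimes>\<^bsub>free_group n\<^esub> [l] \<otimes>\<^bsub>free_group n\<^esub>
               inv\<^bsub>free_group n\<^esub> monomial_word (g + letter_exp l)"
proof -
  obtain i s where l: "l = (i, s)" and "i < n"
    using assms(1) by (cases l) auto
  show ?thesis
  proof (cases s)
    case True
    then have "monomial_word (g + letter_exp l + unit_vec i) = monomial_word g"
      by (simp add: l letter_exp_def)
    moreover have "inv\<^bsub>free_group n\<^esub> [(i, False)] = [l]"
      using \<open>i < n\<close> True by (simp add: l inv_letter_free_group inv_letter_def)
    ultimately show ?thesis
      using \<open>i < n\<close> True
      by (simp add: l e_def edge_word_def monomial_word_closed letter_in_free_group
                    free.inv_mult_group free.m_assoc)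
  qed (simp add: l e_def edge_word_def letter_exp_def)
qed

lemma monomial_word_telescope:
  "w \<in> carrier (free_group n) \<Longrightarrow>
     monomial_word g \<otimes>\<^bsub>free_group n\<^esub> w \<otimes>\<^bsub>free_group n\<^esub> inv\<^bsub>free_group n\<^esub> monomial_word (g + word_exp w)
       = signed_prod (free_group n) edge_word (edges g w)"
proof (induction w arbitrary: g)
  case Nil
  have "monomial_word g \<otimes>\<^bsub>free_group n\<^esub> \<one>\<^bsub>free_group n\<^esub> \<otimes>\<^bsub>free_group n\<^esub>
          inv\<^bsub>free_group n\<^esub> monomial_word g = \<one>\<^bsub>free_group n\<^esub>"
    by (simp add: monomial_word_closed)
  then show ?case
    by (simp add: one_free_group)
next
  case (Cons l w)
  have l: "fst l < n"
    using Cons.prems by (simp add: carrier_free_group)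
  have w: "w \<in> carrier (free_group n)" and lw: "l # w = [l] \<otimes>\<^bsub>free_group n\<^esub> w"
    using free_group_Cons[OF Cons.prems] by auto
  define g' where "g' = g + letter_exp l"
  have "monomial_word g \<otimes>\<^bsub>free_group n\<^esub> (l # w) \<otimes>\<^bsub>free_group n\<^esub>
          inv\<^bsub>free_group n\<^esub> monomial_word (g + word_exp (l # w))
        = monomial_word g \<otimes>\<^bsub>free_group n\<^esub> ([l] \<otimes>\<^bsub>free_group n\<^esub> w) \<otimes>\<^bsub>free_group n\<^esub>
            inv\<^bsub>free_group n\<^esub> monomial_word (g' + word_exp w)"
    by (simp add: g'_def add.assoc flip: lw)
  also have "\<dots> = (monomial_word g \<otimes>\<^bsub>free_group n\<^esub> [l] \<otimes>\<^bsub>free_group n\<^esub>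
                    inv\<^bsub>free_group n\<^esub> monomial_word g')
          \<otimes>\<^bsub>free_group n\<^esub> (monomial_word g' \<otimes>\<^bsub>free_group n\<^esub> w \<otimes>\<^bsub>free_group n\<^esub>
                              inv\<^bsub>free_group n\<^esub> monomial_word (g' + word_exp w))"
    using l w
    by (simp add: free.m_assoc monomial_word_closed letter_in_free_group free.inv_mult_cancel_left)
  also have "\<dots> = signed_prod (free_group n) edge_word (edges g (l # w))"
    by (simp only: Cons.IH[OF w] signed_edge_word_letter[OF l, symmetric] g'_def edges.simps
                   signed_prod_Cons)
  finally show ?case .
qed

lemma edge_word_in_derived:
  assumes "snd e < n"
  shows "edge_word e \<in> derived (free_group n) (carrier (free_group n))"
proof -
  define D where "D = derived (free_group n) (carrier (free_group n))"
  define Q where "Q = free_group n Mod D"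
  define \<pi> where "\<pi> x = D #>\<^bsub>free_group n\<^esub> x" for x
  interpret D: normal D "free_group n"
    unfolding D_def by (rule free.derived_self_is_normal)
  interpret Q: comm_group Q
    unfolding Q_def D_def by (rule free.derived_quot_is_comm_group)
  interpret \<pi>: group_hom "free_group n" Q \<pi>
    unfolding group_hom_def group_hom_axioms_def \<pi>_def Q_def
    using free.is_group Q.is_group D.r_coset_hom_Mod by (simp add: Q_def)
  obtain h i where e: "e = (h, i)" and "i < n"
    using assms by (cases e) auto
  define x where "x = \<pi> [(i, False)]"
  define s where "s = \<pi> (monomial_word h)"
  have xs_carrier: "x \<in> carrier Q" "s \<in> carrier Q"
    using \<open>i < n\<close> by (simp_all add: x_def s_def letter_in_free_group monomial_word_closed)
  have \<pi>_monomial: "\<pi> (monomial_word k) = power_prod Q (\<pi> \<circ> (\<lambda>j. [(j, False)])) k [0..<n]" for k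
    unfolding monomial_word_def by (rule \<pi>.hom_power_prod) (simp add: letter_in_free_group)
  have "\<pi> (monomial_word (h + unit_vec i)) = x \<otimes>\<^bsub>Q\<^esub> s"
    unfolding \<pi>_monomial unit_vec_def using \<open>i < n\<close>
    by (subst Q.power_prod_add_indicator)
       (auto simp: x_def s_def \<pi>_monomial letter_in_free_group intro: \<pi>.hom_closed)
  then have "\<pi> (edge_word e) = s \<otimes>\<^bsub>Q\<^esub> x \<otimes>\<^bsub>Q\<^esub> inv\<^bsub>Q\<^esub> (x \<otimes>\<^bsub>Q\<^esub> s)"
    using \<open>i < n\<close>
    by (simp add: e edge_word_def x_def s_def monomial_word_closed letter_in_free_group)
  also have "\<dots> = \<one>\<^bsub>Q\<^esub>"
    using xs_carrier by (simp add: Q.m_comm[of s x] Q.r_inv)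
  finally have "D #>\<^bsub>free_group n\<^esub> edge_word e = D"
    by (simp add: \<pi>_def Q_def)
  moreover have "edge_word e \<in> D #>\<^bsub>free_group n\<^esub> edge_word e"
    using assms by (simp add: free.rcos_self edge_word_closed D.subgroup_axioms)
  ultimately show ?thesis
    by (simp add: D_def)
qed

lemma kernel_word_mat_subset:
  assumes w: "w \<in> carrier (free_group n)" and "word_mat w = \<one>\<^bsub>ST\<^esub>"
  shows "w \<in> derived (free_group n) (derived (free_group n) (carrier (free_group n)))"
proof -
  have letters: "\<forall>l\<in>set w. fst l < n"
    using w by (simp add: carrier_free_group)
  then have "tmon (word_exp w) = 1" and L: "lower_sum 0 w = 0"
    using assms(2) by (simp_all add: word_mat_eq ST_one st_eq_iff tmon_nonzero)
  then have "word_exp w = 0"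
    using letters by (simp add: tmon_eq_1_iff word_exp_eq_0_outside)
  then have "w = signed_prod (free_group n) edge_word (edges 0 w)"
    using monomial_word_telescope[OF w, of 0] w by (simp add: monomial_word_zero)
  also have "\<dots> \<in> derived (free_group n) (derived (free_group n) (carrier (free_group n)))"
  proof (rule free.signed_prod_balanced_in_derived)
    show "subgroup (derived (free_group n) (carrier (free_group n))) (free_group n)"
      by (simp add: free.derived_is_subgroup)
    show "\<forall>z\<in>set (edges 0 w). edge_word (fst z) \<in> derived (free_group n) (carrier (free_group n))"
      using edges_in_range(1)[OF letters] by (auto intro: edge_word_in_derived)
  qed (use lower_sum_eq_0_imp_balanced[OF letters L] in simp)
  finally show ?thesis .
qed

theorem kernel_word_mat:
  "kernel (free_group n) ST word_mat = derived (free_group n) (derived (free_group n) (carrier (free_group n)))"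
  using kernel_word_mat_subset free.second_derived_subset_kernel_ST[OF word_mat_hom]
  by (auto simp: kernel_def)

end

theorem corollary3p4:
  fixes n :: nat
  assumes "n \<ge> 2"
    and "trdeg_ge TYPE('k::field_char_0) n"
  shows "\<exists>h. h \<in> mon (free_group n Mod
                         derived (free_group n) (derived (free_group n) (carrier (free_group n))))
                        (ST :: ('k ^ 2 ^ 2) monoid)"
proof -
  obtain t :: "nat \<Rightarrow> 'k" where "alg_indep_rat n t"
    using assms(2) by (auto simp: trdeg_ge_def)
  then interpret alg_indep_family n t
    by unfold_locales
  interpret group_hom "free_group n" "ST :: ('k ^ 2 ^ 2) monoid" word_mat
    by (simp add: group_hom_def group_hom_axioms_def group_free_group group_ST word_mat_hom)
  show ?thesis
    using FactGroup_kernel_mon unfolding kernel_word_mat by blast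
qed

end
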